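(* Let $0<\nu\le 1$. Let $C\in\mathcal M_N(\mathbb C)$ be a $K$-banded circulant matrix, i.e. $C=\sum_{\ell=-K}^{K} c_\ell Q^\ell$ with $c_\ell\in\mathbb C$, where $Q$ is the $N\times N$ cyclic permutation matrix, and let $\kappa_C=\|C\|\,\|C^{-1}\|$. Let $\mathbf b\in\mathbb C^N$ be a normalized vector ($\|\mathbf b\|=1$). Then there exists a truncation threshold $T\in\mathcal O\!\left(K\cdot\kappa_C\log\frac{\kappa_C}{\nu}\right)$ such that, writing $\tilde x(\alpha)=\sum_{m=-T}^{T}\alpha_m Q^m\mathbf b$ for $\alpha=(\alpha_m)_{m=-T}^{T}\in\mathbb C^{2T+1}$, an optimal parameter set $\alpha$ exists and $$\min_{\alpha\in\mathbb C^{2T+1}}\|C\tilde x(\alpha)-\mathbf b\|^2\le\min_{x\in\mathbb C^N}\|Cx-\mathbf b\|^2+\nu .$$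
   Context: $Q\in\mathcal M_N(\mathbb R)$ is the cyclic permutation matrix with $Q_{i+1,i}=1$ for $i=0,\dots,N-2$, $Q_{0,N-1}=1$ and all other entries $0$ (so $Q\mathbf e_i=\mathbf e_{i+1 \bmod N}$); negative powers $Q^{-\ell}=Q^{N-\ell}$. A circulant matrix is $C=\sum_{\ell=0}^{N-1}c_\ell Q^\ell$; it is called $K$-banded (the paper takes $K\in\mathcal O(\operatorname{poly}\log N)$) if $c_{K+1}=\dots=c_{N-K-1}=0$, and one writes $c_{-\ell}:=c_{N-\ell}$ so that $C=\sum_{\ell=-K}^{K}c_\ell Q^\ell$. $\|\cdot\|$ denotes the Euclidean norm on vectors and the spectral norm on matrices; $C^{-1}$ denotes the (Moore–Penrose) pseudoinverse, so $\|C^{-1}\|=1/\sigma_{\min}(C)$ with $\sigma_{\min}(C)$ the smallest nonzero singular value, and $\kappa_C=\sigma_{\max}(C)/\sigma_{\min}(C)$. *)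

theory Defs
  imports "Jordan_Normal_Form.Schur_Decomposition"
begin

definition vnorm :: "complex vec \<Rightarrow> real" where
  "vnorm v = sqrt (\<Sum>i<dim_vec v. (cmod (v $ i))\<^sup>2)"

text \<open>The power Q^m (m an integer) of the N x N cyclic permutation matrix with
  Q e_i = e_(i+1 mod N); entry (i,j) is 1 iff i = j + m (mod N).\<close>
definition Qpow :: "nat \<Rightarrow> int \<Rightarrow> complex mat" where
  "Qpow N m = mat N N (\<lambda>(i,j). if int i mod int N = (int j + m) mod int N then 1 else 0)"

definition circ :: "nat \<Rightarrow> nat \<Rightarrow> (int \<Rightarrow> complex) \<Rightarrow> complex mat" where
  "circ N K c = mat N N (\<lambda>(i,j). \<Sum>l\<in>{-int K..int K}. c l * (Qpow N l $$ (i,j)))"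

definition singular_values :: "complex mat \<Rightarrow> real set" where
  "singular_values C = {sqrt (Re mu) | mu. eigenvalue (mat_adjoint C * C) mu}"

definition sigma_max :: "complex mat \<Rightarrow> real" where
  "sigma_max C = Max (singular_values C)"

definition sigma_min :: "complex mat \<Rightarrow> real" where
  "sigma_min C = Min (singular_values C - {0})"

text \<open>Condition number kappa_C = sigma_max / sigma_min = norm C * norm (pseudoinverse C).\<close>
definition cond_num :: "complex mat \<Rightarrow> real" where
  "cond_num C = sigma_max C / sigma_min C"

definition ansatz :: "nat \<Rightarrow> nat \<Rightarrow> (int \<Rightarrow> complex) \<Rightarrow> complex vec \<Rightarrow> complex vec" where
  "ansatz N T \<alpha> b = vec N (\<lambda>i. \<Sum>m\<in>{-int T..int T}. \<alpha> m * ((Qpow N m *\<^sub>v b) $ i))"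

end

theory Submission
  imports Defs "HOL-Computational_Algebra.Polynomial"
begin

text \<open>
  The discrete Fourier transform diagonalises circulant matrices: on the j-th Fourier
  coefficient, C = sum_l c_l Q^l acts as multiplication by lambda_j = sum_l c_l w^(-l j),
  where w = exp (2 pi i / N). Hence the singular values of C are the |lambda_j|, and
  kappa = max |lambda_j| / min {|lambda_j| | lambda_j ~= 0}. The ansatz sum_m alpha_m Q^m b
  has Fourier coefficients p_j hat-b_j, where p_j = sum_m alpha_m w^(-m j) is a trigonometric
  polynomial of degree T. By Parseval both residuals split over the Fourier modes: no x does
  better than the mass of hat-b on the modes with lambda_j = 0, and the ansatz pays on top of
  that at most the maximum of |lambda_j p_j - 1|^2 over the modes with lambda_j ~= 0.
  Choosing p_j = conj(lambda_j) q(|lambda_j|^2), where 1 - t q(t) is a Chebyshev polynomial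
  rescaled to be at most sqrt nu in absolute value on [sigma_min^2, sigma_max^2], keeps this
  extra cost below nu. Since lambda has degree K and q needs degree about kappa ln (4 / nu),
  degree T = K (1 + 2 deg q) suffices. An optimal alpha exists because the residual is a
  finite-dimensional least-squares problem.
\<close>

section \<open>Roots of unity and the discrete Fourier transform\<close>

definition unit_root :: "nat \<Rightarrow> int \<Rightarrow> complex" where
  "unit_root N k = cis (2 * pi * of_int k / of_nat N)"

lemma unit_root_add: "unit_root N (a + b) = unit_root N a * unit_root N b"
  by (simp add: unit_root_def cis_mult add_divide_distrib distrib_left)

lemma unit_root_0 [simp]: "unit_root N 0 = 1"
  by (simp add: unit_root_def)

lemma cnj_unit_root: "cnj (unit_root N a) = unit_root N (- a)"
  by (simp add: unit_root_def cis_cnj)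

lemma unit_root_power: "unit_root N a ^ n = unit_root N (a * int n)"
  by (induction n) (simp_all add: unit_root_add distrib_left mult.commute)

lemma unit_root_mult_N: "N > 0 \<Longrightarrow> unit_root N (int N * k) = 1"
  using cis_multiple_2pi[of "of_int k"] by (simp add: unit_root_def mult.assoc)

lemma unit_root_mod:
  assumes "N > 0" shows "unit_root N (a mod int N) = unit_root N a"
  using unit_root_add[of N "a mod int N" "int N * (a div int N)"] unit_root_mult_N[OF assms]
  by simp

lemma unit_root_cong:
  assumes "N > 0" "a mod int N = b mod int N" shows "unit_root N a = unit_root N b"
  by (metis assms unit_root_mod)

lemma unit_root_inj:
  assumes "i < N" "k < N" "unit_root N (int i) = unit_root N (int k)"
  shows "i = k"
  using bij_betw_roots_unity[of N] assms unfolding bij_betw_def inj_on_def unit_root_def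
  by auto

lemma sum_unit_root_orthogonal:
  assumes "i < N" "k < N"
  shows "(\<Sum>j<N. unit_root N (int k * int j) * unit_root N (- (int i * int j)))
         = (if i = k then of_nat N else 0)"
proof -
  define z where "z = unit_root N (int k - int i)"
  have powers: "unit_root N (int k * int j) * unit_root N (- (int i * int j)) = z ^ j" for j
    by (simp add: z_def unit_root_power unit_root_add[symmetric] algebra_simps)
  have "z ^ N = 1"
    using assms by (simp add: z_def unit_root_power mult.commute unit_root_mult_N)
  moreover have "z = 1 \<Longrightarrow> i = k"
    using assms unit_root_inj[of i N k] unit_root_add[of N "int k - int i" "int i"]
    by (simp add: z_def)
  ultimately show ?thesis
    by (auto simp: powers z_def sum_gp_strict)
qed

definition dft :: "complex vec \<Rightarrow> nat \<Rightarrow> complex" where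
  "dft x j = (\<Sum>i<dim_vec x. x $ i * unit_root (dim_vec x) (- (int i * int j)))"

lemma vnorm_sq: "(vnorm x)\<^sup>2 = (\<Sum>i<dim_vec x. (cmod (x $ i))\<^sup>2)"
  unfolding vnorm_def by (simp add: sum_nonneg)

lemma vnorm_eq_0_imp:
  assumes "vnorm x = 0" shows "x = 0\<^sub>v (dim_vec x)"
proof (rule eq_vecI)
  fix i assume "i < dim_vec (0\<^sub>v (dim_vec x) :: complex vec)"
  then have "i < dim_vec x" by simp
  moreover have "(\<Sum>i<dim_vec x. (cmod (x $ i))\<^sup>2) = 0"
    using assms vnorm_sq[of x] by simp
  ultimately show "x $ i = 0\<^sub>v (dim_vec x) $ i"
    by (simp add: sum_nonneg_eq_0_iff)
qed simp

lemma sum_cmod_dft_sq: "(\<Sum>j<dim_vec x. (cmod (dft x j))\<^sup>2) = dim_vec x * (vnorm x)\<^sup>2"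
proof -
  let ?N = "dim_vec x" and ?w = "unit_root (dim_vec x)"
  have sq: "(cmod z)\<^sup>2 = Re (z * cnj z)" for z by (simp add: complex_mult_cnj cmod_power2)
  have "(\<Sum>j<?N. dft x j * cnj (dft x j))
     = (\<Sum>j<?N. \<Sum>i<?N. \<Sum>k<?N. x $ i * cnj (x $ k) * (?w (int k * int j) * ?w (- (int i * int j))))"
    unfolding dft_def by (simp add: cnj_sum sum_product cnj_unit_root mult_ac)
  also have "\<dots> = (\<Sum>i<?N. \<Sum>k<?N. \<Sum>j<?N. x $ i * cnj (x $ k) * (?w (int k * int j) * ?w (- (int i * int j))))"
    by (subst sum.swap) (rule sum.cong[OF refl], rule sum.swap)
  also have "\<dots> = (\<Sum>i<?N. \<Sum>k<?N. x $ i * cnj (x $ k) * (\<Sum>j<?N. ?w (int k * int j) * ?w (- (int i * int j))))"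
    by (simp only: sum_distrib_left)
  also have "\<dots> = (\<Sum>i<?N. x $ i * cnj (x $ i) * of_nat ?N)"
    by (simp add: sum_unit_root_orthogonal if_distrib cong: if_cong)
  finally have "(\<Sum>j<?N. dft x j * cnj (dft x j)) = of_nat ?N * (\<Sum>i<?N. x $ i * cnj (x $ i))"
    by (simp add: sum_distrib_left mult.commute)
  then have "Re (\<Sum>j<?N. dft x j * cnj (dft x j)) = ?N * Re (\<Sum>i<?N. x $ i * cnj (x $ i))"
    by simp
  then show ?thesis
    by (simp add: sq vnorm_sq)
qed

lemma dft_diff:
  assumes "x \<in> carrier_vec N" "y \<in> carrier_vec N"
  shows "dft (x - y) j = dft x j - dft y j"
  using assms unfolding dft_def by (simp add: sum_subtractf left_diff_distrib)

lemma dft_smult: "dft (a \<cdot>\<^sub>v x) j = a * dft x j"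
  unfolding dft_def by (simp add: sum_distrib_left mult.assoc)

lemma dft_inj:
  assumes x: "x \<in> carrier_vec N" and y: "y \<in> carrier_vec N"
    and eq: "\<And>j. j < N \<Longrightarrow> dft x j = dft y j"
  shows "x = y"
proof -
  have "real N * (vnorm (x - y))\<^sup>2 = 0"
    using sum_cmod_dft_sq[of "x - y"] x y eq by (simp add: dft_diff)
  then have "N = 0 \<or> vnorm (x - y) = 0" by simp
  then have "x - y = 0\<^sub>v N"
    using x y vnorm_eq_0_imp[of "x - y"] by (auto intro: eq_vecI)
  then have "(x - y) $ i = 0" if "i < N" for i
    using that by simp
  then show ?thesis
    using x y by (intro eq_vecI) auto
qed

lemma index_mult_mat_vec_sum:
  assumes "A \<in> carrier_mat N N" "x \<in> carrier_vec N" "i < N"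
  shows "(A *\<^sub>v x) $ i = (\<Sum>k<N. A $$ (i, k) * x $ k)"
  using assms by (simp add: scalar_prod_def lessThan_atLeast0)

lemma Qpow_carrier [simp]: "Qpow N m \<in> carrier_mat N N"
  by (simp add: Qpow_def)

lemma sum_Qpow_column:
  assumes k: "k < N"
  shows "(\<Sum>i<N. Qpow N m $$ (i, k) * unit_root N (- (int i * int j)))
         = unit_root N (- ((int k + m) * int j))"
proof -
  have N: "N > 0" using k by simp
  define r where "r = nat ((int k + m) mod int N)"
  have r: "r < N" "int r = (int k + m) mod int N"
    using N by (simp_all add: r_def nat_less_iff)
  have "(\<Sum>i<N. Qpow N m $$ (i, k) * unit_root N (- (int i * int j)))
      = (\<Sum>i<N. if i = r then unit_root N (- (int i * int j)) else 0)"
    using k r(2) by (intro sum.cong) (auto simp: Qpow_def)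
  also have "\<dots> = unit_root N (- (int r * int j))"
    using r(1) by simp
  also have "\<dots> = unit_root N (- ((int k + m) * int j))"
  proof (rule unit_root_cong[OF N])
    show "- (int r * int j) mod int N = - ((int k + m) * int j) mod int N"
      unfolding r(2) by (metis mod_minus_eq mod_mult_left_eq)
  qed
  finally show ?thesis .
qed

lemma dft_Qpow_mult_vec:
  assumes x: "x \<in> carrier_vec N"
  shows "dft (Qpow N m *\<^sub>v x) j = unit_root N (- (m * int j)) * dft x j"
proof -
  have "dim_vec (Qpow N m *\<^sub>v x) = N"
    by (simp add: Qpow_def)
  then have "dft (Qpow N m *\<^sub>v x) j
      = (\<Sum>i<N. \<Sum>k<N. x $ k * (Qpow N m $$ (i, k) * unit_root N (- (int i * int j))))"
    unfolding dft_def
    by (simp add: index_mult_mat_vec_sum[OF Qpow_carrier x] sum_distrib_left mult_ac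
        del: index_mult_mat_vec)
  also have "\<dots> = (\<Sum>k<N. x $ k * unit_root N (- ((int k + m) * int j)))"
    by (subst sum.swap) (simp add: sum_distrib_left[symmetric] sum_Qpow_column)
  also have "\<dots> = unit_root N (- (m * int j)) * dft x j"
    using x unfolding dft_def
    by (simp add: sum_distrib_left unit_root_add[symmetric] algebra_simps)
  finally show ?thesis .
qed

section \<open>Circulant matrices in the Fourier basis\<close>

definition lincomb_vec :: "nat \<Rightarrow> 'i set \<Rightarrow> ('i \<Rightarrow> complex) \<Rightarrow> ('i \<Rightarrow> complex vec) \<Rightarrow> complex vec"
  where "lincomb_vec N I a u = vec N (\<lambda>i. \<Sum>k\<in>I. a k * u k $ i)"

definition trig_sum :: "nat \<Rightarrow> int set \<Rightarrow> (int \<Rightarrow> complex) \<Rightarrow> nat \<Rightarrow> complex" where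
  "trig_sum N S a j = (\<Sum>m\<in>S. a m * unit_root N (- (m * int j)))"

lemma lincomb_vec_carrier [simp]: "lincomb_vec N I a u \<in> carrier_vec N"
  by (simp add: lincomb_vec_def)

lemma dft_lincomb_vec:
  assumes "finite I" "\<And>k. k \<in> I \<Longrightarrow> u k \<in> carrier_vec N"
  shows "dft (lincomb_vec N I a u) j = (\<Sum>k\<in>I. a k * dft (u k) j)"
proof -
  have "dft (lincomb_vec N I a u) j = (\<Sum>k\<in>I. a k * (\<Sum>i<N. u k $ i * unit_root N (- (int i * int j))))"
    unfolding dft_def lincomb_vec_def
    by (simp add: sum_distrib_left sum_distrib_right sum.swap[of _ I] mult.assoc)
  also have "\<dots> = (\<Sum>k\<in>I. a k * dft (u k) j)"
  proof (intro sum.cong refl)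
    fix k assume "k \<in> I"
    then have "dim_vec (u k) = N" using assms(2) carrier_vecD by blast
    then show "a k * (\<Sum>i<N. u k $ i * unit_root N (- (int i * int j))) = a k * dft (u k) j"
      by (simp add: dft_def)
  qed
  finally show ?thesis .
qed

lemma dft_lincomb_shifts:
  assumes "finite S" "x \<in> carrier_vec N"
  shows "dft (lincomb_vec N S a (\<lambda>m. Qpow N m *\<^sub>v x)) j = trig_sum N S a j * dft x j"
proof -
  have "Qpow N m *\<^sub>v x \<in> carrier_vec N" for m
    using assms(2) by (rule mult_mat_vec_carrier[OF Qpow_carrier])
  then show ?thesis
    using assms
    by (simp add: dft_lincomb_vec[where N = N] dft_Qpow_mult_vec trig_sum_def sum_distrib_right
        mult.assoc)
qed

lemma mult_vec_eq_lincomb_shifts: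
  assumes A: "A \<in> carrier_mat N N" and x: "x \<in> carrier_vec N"
    and entries: "\<And>i k. i < N \<Longrightarrow> k < N \<Longrightarrow> A $$ (i, k) = (\<Sum>l\<in>S. a l * Qpow N l $$ (i, k))"
  shows "A *\<^sub>v x = lincomb_vec N S a (\<lambda>l. Qpow N l *\<^sub>v x)"
proof (rule eq_vecI)
  fix i assume "i < dim_vec (lincomb_vec N S a (\<lambda>l. Qpow N l *\<^sub>v x))"
  then have i: "i < N" by (simp add: lincomb_vec_def)
  have "(A *\<^sub>v x) $ i = (\<Sum>k<N. \<Sum>l\<in>S. a l * (Qpow N l $$ (i, k) * x $ k))"
    using i by (simp add: index_mult_mat_vec_sum[OF A x] entries sum_distrib_right mult.assoc
        del: index_mult_mat_vec)
  also have "\<dots> = (\<Sum>l\<in>S. a l * (Qpow N l *\<^sub>v x) $ i)"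
    using i by (subst sum.swap) (simp add: index_mult_mat_vec_sum[OF Qpow_carrier x] sum_distrib_left
        del: index_mult_mat_vec)
  finally show "(A *\<^sub>v x) $ i = lincomb_vec N S a (\<lambda>l. Qpow N l *\<^sub>v x) $ i"
    using i by (simp add: lincomb_vec_def)
qed (use A in \<open>simp add: lincomb_vec_def\<close>)

lemma Qpow_uminus_index:
  assumes "i < N" "k < N"
  shows "Qpow N (- l) $$ (k, i) = Qpow N l $$ (i, k)"
proof -
  have "int k - (int i + - l) = - (int i - (int k + l))" by simp
  then have "(int k mod int N = (int i + - l) mod int N) \<longleftrightarrow> (int i mod int N = (int k + l) mod int N)"
    unfolding mod_eq_dvd_iff by (metis dvd_minus_iff)
  then show ?thesis
    using assms by (simp add: Qpow_def)
qed

lemma sum_int_interval_reflect: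
  "(\<Sum>l\<in>{-int K..int K}. f (- l)) = (\<Sum>l\<in>{-int K..int K}. f l)"
  by (rule sum.reindex_bij_witness[of _ uminus uminus]) auto

definition circ_eigenvalue :: "nat \<Rightarrow> nat \<Rightarrow> (int \<Rightarrow> complex) \<Rightarrow> nat \<Rightarrow> complex" where
  "circ_eigenvalue N K c = trig_sum N {-int K..int K} c"

lemma circ_carrier [simp]: "circ N K c \<in> carrier_mat N N"
  by (simp add: circ_def)

lemma adjoint_carrier [simp]: "A \<in> carrier_mat N N \<Longrightarrow> mat_adjoint A \<in> carrier_mat N N"
  unfolding mat_adjoint_def carrier_mat_def by auto

lemma mat_adjoint_index:
  assumes "A \<in> carrier_mat N N" "i < N" "k < N"
  shows "mat_adjoint A $$ (i, k) = cnj (A $$ (k, i))"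
  using assms unfolding mat_adjoint_def by (simp add: mat_of_rows_index conjugate_vec_def)

lemma circ_mult_vec:
  assumes "x \<in> carrier_vec N"
  shows "circ N K c *\<^sub>v x = lincomb_vec N {-int K..int K} c (\<lambda>l. Qpow N l *\<^sub>v x)"
  using assms by (intro mult_vec_eq_lincomb_shifts) (auto simp: circ_def)

lemma adjoint_circ_mult_vec:
  assumes x: "x \<in> carrier_vec N"
  shows "mat_adjoint (circ N K c) *\<^sub>v x
         = lincomb_vec N {-int K..int K} (\<lambda>l. cnj (c (- l))) (\<lambda>l. Qpow N l *\<^sub>v x)"
proof (rule mult_vec_eq_lincomb_shifts[OF adjoint_carrier[OF circ_carrier] x])
  fix i k assume ik: "i < N" "k < N"
  have Qpow_real: "cnj (Qpow N l $$ (k, i)) = Qpow N l $$ (k, i)" for l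
    using ik by (simp add: Qpow_def)
  have "mat_adjoint (circ N K c) $$ (i, k) = (\<Sum>l\<in>{-int K..int K}. cnj (c l) * Qpow N l $$ (k, i))"
    using ik by (simp add: mat_adjoint_index[OF circ_carrier ik]) (simp add: circ_def cnj_sum Qpow_real)
  also have "\<dots> = (\<Sum>l\<in>{-int K..int K}. cnj (c (- l)) * Qpow N (- l) $$ (k, i))"
    by (rule sum_int_interval_reflect[symmetric])
  finally show "mat_adjoint (circ N K c) $$ (i, k)
      = (\<Sum>l\<in>{-int K..int K}. cnj (c (- l)) * Qpow N l $$ (i, k))"
    using ik by (simp add: Qpow_uminus_index)
qed

lemma dft_circ_mult_vec:
  assumes "x \<in> carrier_vec N"
  shows "dft (circ N K c *\<^sub>v x) j = circ_eigenvalue N K c j * dft x j"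
  using assms by (simp add: circ_mult_vec dft_lincomb_shifts circ_eigenvalue_def)

lemma dft_adjoint_circ_mult_vec:
  assumes "x \<in> carrier_vec N"
  shows "dft (mat_adjoint (circ N K c) *\<^sub>v x) j = cnj (circ_eigenvalue N K c j) * dft x j"
proof -
  have "trig_sum N {-int K..int K} (\<lambda>l. cnj (c (- l))) j = cnj (trig_sum N {-int K..int K} c j)"
    unfolding trig_sum_def cnj_sum
    by (subst sum_int_interval_reflect[symmetric]) (simp add: cnj_unit_root)
  then show ?thesis
    using assms by (simp add: adjoint_circ_mult_vec dft_lincomb_shifts circ_eigenvalue_def)
qed

lemma dft_gram_circ_mult_vec:
  assumes x: "x \<in> carrier_vec N"
  shows "dft ((mat_adjoint (circ N K c) * circ N K c) *\<^sub>v x) j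
         = of_real ((cmod (circ_eigenvalue N K c j))\<^sup>2) * dft x j"
proof -
  have "circ N K c *\<^sub>v x \<in> carrier_vec N"
    by (rule mult_mat_vec_carrier[OF circ_carrier x])
  then show ?thesis
    unfolding complex_norm_square
    by (simp add: assoc_mult_mat_vec[OF adjoint_carrier[OF circ_carrier] circ_carrier x]
        dft_adjoint_circ_mult_vec dft_circ_mult_vec x mult_ac)
qed

lemma gram_circ_carrier: "mat_adjoint (circ N K c) * circ N K c \<in> carrier_mat N N"
  by (rule mult_carrier_mat[OF adjoint_carrier[OF circ_carrier] circ_carrier])

lemma eigenvalue_gram_circ_iff:
  "eigenvalue (mat_adjoint (circ N K c) * circ N K c) \<mu> \<longleftrightarrow>
   (\<exists>v. v \<in> carrier_vec N \<and> v \<noteq> 0\<^sub>v N \<and> (mat_adjoint (circ N K c) * circ N K c) *\<^sub>v v = \<mu> \<cdot>\<^sub>v v)"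
  using carrier_matD(1)[OF gram_circ_carrier] unfolding eigenvalue_def eigenvector_def by simp

lemma eigenvalue_gram_circ_cases:
  assumes "eigenvalue (mat_adjoint (circ N K c) * circ N K c) \<mu>"
  obtains j where "j < N" "\<mu> = of_real ((cmod (circ_eigenvalue N K c j))\<^sup>2)"
proof -
  obtain v where v: "v \<in> carrier_vec N" "v \<noteq> 0\<^sub>v N"
      "(mat_adjoint (circ N K c) * circ N K c) *\<^sub>v v = \<mu> \<cdot>\<^sub>v v"
    using assms unfolding eigenvalue_gram_circ_iff by blast
  obtain j where j: "j < N" "dft v j \<noteq> 0"
    using dft_inj[OF v(1) zero_carrier_vec] v(2) by (auto simp: dft_def)
  have "of_real ((cmod (circ_eigenvalue N K c j))\<^sup>2) * dft v j = \<mu> * dft v j"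
    using dft_gram_circ_mult_vec[OF v(1), of K c j] v(3) by (simp only: dft_smult)
  then show ?thesis
    using that j by simp
qed

lemma eigenvalue_gram_circ:
  assumes j: "j < N"
  shows "eigenvalue (mat_adjoint (circ N K c) * circ N K c) (of_real ((cmod (circ_eigenvalue N K c j))\<^sup>2))"
proof -
  let ?\<mu> = "complex_of_real ((cmod (circ_eigenvalue N K c j))\<^sup>2)"
  define e where "e = vec N (\<lambda>i. unit_root N (int i * int j))"
  have e: "e \<in> carrier_vec N" by (simp add: e_def)
  have dft_e: "dft e k = (if k = j then of_nat N else 0)" if "k < N" for k
    using sum_unit_root_orthogonal[OF that j] by (simp add: e_def dft_def mult.commute)
  have "(mat_adjoint (circ N K c) * circ N K c) *\<^sub>v e = ?\<mu> \<cdot>\<^sub>v e"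
    using e mult_mat_vec_carrier[OF gram_circ_carrier e]
    by (intro dft_inj[of _ N]) (auto simp: dft_gram_circ_mult_vec dft_smult dft_e)
  moreover have "e \<noteq> 0\<^sub>v N"
    using j by (auto simp: e_def dest!: arg_cong[where f = "\<lambda>v. v $ 0"])
  ultimately show ?thesis
    using e unfolding eigenvalue_gram_circ_iff by blast
qed

lemma singular_values_circ:
  "singular_values (circ N K c) = (\<lambda>j. cmod (circ_eigenvalue N K c j)) ` {..<N}"
proof (intro equalityI subsetI)
  fix s assume "s \<in> singular_values (circ N K c)"
  then obtain \<mu> where "s = sqrt (Re \<mu>)" "eigenvalue (mat_adjoint (circ N K c) * circ N K c) \<mu>"
    unfolding singular_values_def by blast
  then show "s \<in> (\<lambda>j. cmod (circ_eigenvalue N K c j)) ` {..<N}"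
    by (elim eigenvalue_gram_circ_cases) auto
next
  fix s assume "s \<in> (\<lambda>j. cmod (circ_eigenvalue N K c j)) ` {..<N}"
  then obtain j where "j < N" "s = sqrt (Re (of_real ((cmod (circ_eigenvalue N K c j))\<^sup>2)))"
    by auto
  then show "s \<in> singular_values (circ N K c)"
    unfolding singular_values_def using eigenvalue_gram_circ by blast
qed

section \<open>Least squares\<close>

definition cinner :: "nat \<Rightarrow> (nat \<Rightarrow> complex) \<Rightarrow> (nat \<Rightarrow> complex) \<Rightarrow> complex" where
  "cinner N f g = (\<Sum>i<N. f i * cnj (g i))"

lemma Re_cinner_self: "Re (cinner N f f) = (\<Sum>i<N. (cmod (f i))\<^sup>2)"
  unfolding cinner_def by (simp add: complex_mult_cnj cmod_power2)

lemma cinner_self_eq_0_imp: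
  assumes "cinner N f f = 0" "i < N" shows "f i = 0"
  using assms sum_nonneg_eq_0_iff[of "{..<N}" "\<lambda>i. (cmod (f i))\<^sup>2"]
  by (simp flip: Re_cinner_self)

lemma cinner_diff_left: "cinner N (\<lambda>i. f i - a * g i) h = cinner N f h - a * cinner N g h"
  unfolding cinner_def by (simp add: sum_subtractf sum_distrib_left algebra_simps)

lemma cinner_add_right: "cinner N f (\<lambda>i. g i + h i) = cinner N f g + cinner N f h"
  unfolding cinner_def by (simp add: sum.distrib algebra_simps)

lemma cinner_sum_right:
  "finite I \<Longrightarrow> cinner N f (\<lambda>i. \<Sum>k\<in>I. a k * u k i) = (\<Sum>k\<in>I. cnj (a k) * cinner N f (u k))"
  unfolding cinner_def
  by (simp add: cnj_sum sum_distrib_left sum_distrib_right sum.swap[of _ I] mult_ac)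

lemma cinner_commute: "cinner N g f = cnj (cinner N f g)"
  unfolding cinner_def by (simp add: cnj_sum mult.commute)

lemma normal_equations_solvable:
  assumes "finite I"
  shows "\<exists>\<beta>. \<forall>m\<in>I. cinner N (\<lambda>i. y i - (\<Sum>k\<in>I. \<beta> k * u k i)) (u m) = 0"
  using assms
proof (induction I arbitrary: y rule: finite_induct)
  case (insert k I)
  obtain \<beta> where \<beta>: "\<forall>m\<in>I. cinner N (\<lambda>i. y i - (\<Sum>k\<in>I. \<beta> k * u k i)) (u m) = 0"
    using insert.IH by blast
  obtain \<eta> where \<eta>: "\<forall>m\<in>I. cinner N (\<lambda>i. u k i - (\<Sum>k\<in>I. \<eta> k * u k i)) (u m) = 0"
    using insert.IH by blast
  define r where "r = (\<lambda>i. y i - (\<Sum>k\<in>I. \<beta> k * u k i))"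
  define v where "v = (\<lambda>i. u k i - (\<Sum>k\<in>I. \<eta> k * u k i))"
  \<comment> \<open>If \<open>v\<close> vanishes, then \<open>a = 0\<close> by division by zero, and \<open>r\<close> is already
    orthogonal to \<open>v\<close>.\<close>
  define a where "a = cinner N r v / cinner N v v"
  define r' where "r' = (\<lambda>i. r i - a * v i)"
  define \<beta>' where "\<beta>' m = (if m = k then a else \<beta> m - a * \<eta> m)" for m
  have r'_eq: "r' i = y i - (\<Sum>m\<in>insert k I. \<beta>' m * u m i)" for i
  proof -
    have "(\<Sum>m\<in>I. \<beta>' m * u m i) = (\<Sum>m\<in>I. \<beta> m * u m i - a * (\<eta> m * u m i))"
      using insert.hyps by (intro sum.cong) (auto simp: \<beta>'_def algebra_simps)
    then have "(\<Sum>m\<in>I. \<beta>' m * u m i) = (\<Sum>m\<in>I. \<beta> m * u m i) - a * (\<Sum>m\<in>I. \<eta> m * u m i)"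
      by (simp add: sum_subtractf sum_distrib_left)
    then show ?thesis
      using insert.hyps by (simp add: r'_def r_def v_def \<beta>'_def algebra_simps)
  qed
  have r'_I: "cinner N r' (u m) = 0" if "m \<in> I" for m
    using that \<beta> \<eta> by (simp add: r'_def r_def v_def cinner_diff_left)
  have "cinner N r' v = 0"
  proof (cases "cinner N v v = 0")
    case True
    then have "cinner N r v = 0"
      using cinner_self_eq_0_imp[OF True] by (simp add: cinner_def)
    then show ?thesis by (simp add: r'_def cinner_diff_left True)
  qed (simp add: r'_def cinner_diff_left, simp add: a_def)
  then have "cinner N r' (\<lambda>i. v i + (\<Sum>m\<in>I. \<eta> m * u m i)) = 0"
    using r'_I insert.hyps(1) by (simp add: cinner_add_right cinner_sum_right)
  then have "cinner N r' (u k) = 0"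
    by (simp add: v_def)
  then show ?case
    using r'_I r'_eq by (intro exI[of _ \<beta>']) (simp flip: r'_eq)
qed simp

lemma least_squares_solvable:
  fixes N :: nat
  assumes "finite I"
  shows "\<exists>\<beta>. \<forall>\<gamma>. (\<Sum>i<N. (cmod (y i - (\<Sum>k\<in>I. \<beta> k * u k i)))\<^sup>2)
                  \<le> (\<Sum>i<N. (cmod (y i - (\<Sum>k\<in>I. \<gamma> k * u k i)))\<^sup>2)"
proof -
  obtain \<beta> where \<beta>: "\<forall>m\<in>I. cinner N (\<lambda>i. y i - (\<Sum>k\<in>I. \<beta> k * u k i)) (u m) = 0"
    using normal_equations_solvable[OF assms] by blast
  define r where "r i = y i - (\<Sum>k\<in>I. \<beta> k * u k i)" for i
  have "Re (cinner N r r) \<le> Re (cinner N (\<lambda>i. y i - (\<Sum>k\<in>I. \<gamma> k * u k i))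
                                         (\<lambda>i. y i - (\<Sum>k\<in>I. \<gamma> k * u k i)))" for \<gamma>
  proof -
    define w where "w i = (\<Sum>k\<in>I. (\<beta> k - \<gamma> k) * u k i)" for i
    have split: "(\<lambda>i. y i - (\<Sum>k\<in>I. \<gamma> k * u k i)) = (\<lambda>i. r i + w i)"
      by (simp add: r_def w_def left_diff_distrib sum_subtractf)
    have rw: "cinner N r w = 0"
      using \<beta> assms unfolding w_def r_def by (simp add: cinner_sum_right)
    then have "cinner N w r = 0"
      by (simp add: cinner_commute[of N w r])
    then have "Re (cinner N (\<lambda>i. r i + w i) (\<lambda>i. r i + w i)) = Re (cinner N r r) + Re (cinner N w w)"
      using rw by (simp add: cinner_def sum.distrib algebra_simps)
    moreover have "0 \<le> Re (cinner N w w)"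
      by (simp add: Re_cinner_self sum_nonneg)
    ultimately show ?thesis
      unfolding split by simp
  qed
  then show ?thesis
    unfolding r_def Re_cinner_self by blast
qed

section \<open>Trigonometric polynomials\<close>

definition trig_poly :: "nat \<Rightarrow> nat \<Rightarrow> (nat \<Rightarrow> complex) \<Rightarrow> bool" where
  "trig_poly N T f \<longleftrightarrow> (\<exists>\<alpha>. \<forall>j<N. f j = trig_sum N {-int T..int T} \<alpha> j)"

lemma trig_poly_cong: "trig_poly N T f \<Longrightarrow> (\<And>j. j < N \<Longrightarrow> f j = g j) \<Longrightarrow> trig_poly N T g"
  unfolding trig_poly_def by auto

lemma trig_poly_mono:
  assumes "trig_poly N T f" "T \<le> T'" shows "trig_poly N T' f"
proof -
  obtain \<alpha> where \<alpha>: "\<forall>j<N. f j = trig_sum N {-int T..int T} \<alpha> j"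
    using assms(1) unfolding trig_poly_def by blast
  have "{-int T'..int T'} \<inter> {m. m \<in> {-int T..int T}} = {-int T..int T}"
    using assms(2) by auto
  then have "trig_sum N {-int T'..int T'} (\<lambda>m. of_bool (m \<in> {-int T..int T}) * \<alpha> m) j
      = trig_sum N {-int T..int T} \<alpha> j" for j
    unfolding trig_sum_def by (simp add: mult.assoc)
  then show ?thesis
    using \<alpha> unfolding trig_poly_def by metis
qed

lemma trig_poly_add:
  assumes "trig_poly N T f" "trig_poly N T g" shows "trig_poly N T (\<lambda>j. f j + g j)"
proof -
  obtain \<alpha> \<beta> where "\<forall>j<N. f j = trig_sum N {-int T..int T} \<alpha> j"
    "\<forall>j<N. g j = trig_sum N {-int T..int T} \<beta> j"
    using assms unfolding trig_poly_def by blast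
  then have "\<forall>j<N. f j + g j = trig_sum N {-int T..int T} (\<lambda>m. \<alpha> m + \<beta> m) j"
    by (simp add: trig_sum_def sum.distrib distrib_right)
  then show ?thesis unfolding trig_poly_def by blast
qed

lemma trig_poly_cmult:
  assumes "trig_poly N T f" shows "trig_poly N T (\<lambda>j. a * f j)"
proof -
  obtain \<alpha> where "\<forall>j<N. f j = trig_sum N {-int T..int T} \<alpha> j"
    using assms unfolding trig_poly_def by blast
  then have "\<forall>j<N. a * f j = trig_sum N {-int T..int T} (\<lambda>m. a * \<alpha> m) j"
    by (simp add: trig_sum_def sum_distrib_left mult.assoc)
  then show ?thesis unfolding trig_poly_def by blast
qed

lemma trig_poly_sum:
  "finite S \<Longrightarrow> (\<And>s. s \<in> S \<Longrightarrow> trig_poly N T (g s)) \<Longrightarrow> trig_poly N T (\<lambda>j. \<Sum>s\<in>S. g s j)"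
proof (induction S rule: finite_induct)
  case empty
  have "trig_sum N {-int T..int T} (\<lambda>_. 0) j = 0" for j
    by (simp add: trig_sum_def)
  then show ?case unfolding trig_poly_def by (metis sum.empty)
qed (simp add: trig_poly_add)

lemma trig_poly_unit_root:
  assumes "\<bar>m\<bar> \<le> int T" shows "trig_poly N T (\<lambda>j. unit_root N (- (m * int j)))"
proof -
  have "{-int T..int T} \<inter> {m'. m' = m} = {m}"
    using assms by auto
  then have "trig_sum N {-int T..int T} (\<lambda>m'. of_bool (m' = m)) j = unit_root N (- (m * int j))" for j
    by (simp add: trig_sum_def)
  then show ?thesis unfolding trig_poly_def by metis
qed

lemma trig_poly_const: "trig_poly N T (\<lambda>j. a)"
  using trig_poly_cmult[OF trig_poly_unit_root[of 0 T N], of a] by simp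

lemma trig_poly_mult:
  assumes "trig_poly N T1 f" "trig_poly N T2 g" shows "trig_poly N (T1 + T2) (\<lambda>j. f j * g j)"
proof -
  obtain \<alpha> \<beta> where \<alpha>: "\<forall>j<N. f j = trig_sum N {-int T1..int T1} \<alpha> j"
    and \<beta>: "\<forall>j<N. g j = trig_sum N {-int T2..int T2} \<beta> j"
    using assms unfolding trig_poly_def by blast
  have "f j * g j = (\<Sum>m\<in>{-int T1..int T1}. \<Sum>n\<in>{-int T2..int T2}.
                        \<alpha> m * \<beta> n * unit_root N (- ((m + n) * int j)))" if "j < N" for j
  proof -
    have "f j * g j = trig_sum N {-int T1..int T1} \<alpha> j * trig_sum N {-int T2..int T2} \<beta> j"
      using that \<alpha> \<beta> by simp
    also have "\<dots> = (\<Sum>m\<in>{-int T1..int T1}. \<Sum>n\<in>{-int T2..int T2}.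
                  \<alpha> m * \<beta> n * (unit_root N (- (m * int j)) * unit_root N (- (n * int j))))"
      unfolding trig_sum_def sum_product by (simp add: mult_ac)
    finally show ?thesis
      by (simp add: unit_root_add[symmetric] algebra_simps)
  qed
  moreover have "trig_poly N (T1 + T2) (\<lambda>j. \<Sum>m\<in>{-int T1..int T1}. \<Sum>n\<in>{-int T2..int T2}.
                        \<alpha> m * \<beta> n * unit_root N (- ((m + n) * int j)))"
    by (intro trig_poly_sum trig_poly_cmult trig_poly_unit_root) auto
  ultimately show ?thesis
    by (auto elim: trig_poly_cong)
qed

lemma trig_poly_poly:
  fixes p :: "real poly"
  assumes t: "trig_poly N D (\<lambda>j. of_real (t j))"
  shows "trig_poly N (D * degree p) (\<lambda>j. of_real (poly p (t j)))"
proof (induction p)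
  case (pCons a p)
  show ?case
  proof (cases "p = 0")
    case True
    then show ?thesis by (simp add: trig_poly_const)
  next
    case False
    have "trig_poly N (D + D * degree p) (\<lambda>j. of_real a + of_real (t j) * of_real (poly p (t j)))"
      using trig_poly_mult[OF t pCons.IH] by (intro trig_poly_add trig_poly_const)
    then show ?thesis
      using False by (simp add: algebra_simps)
  qed
qed (simp add: trig_poly_const)

lemma trig_poly_circ_eigenvalue: "trig_poly N K (circ_eigenvalue N K c)"
  unfolding trig_poly_def circ_eigenvalue_def by blast

lemma trig_poly_cnj_circ_eigenvalue: "trig_poly N K (\<lambda>j. cnj (circ_eigenvalue N K c j))"
proof -
  have "cnj (circ_eigenvalue N K c j) = (\<Sum>l\<in>{-int K..int K}. cnj (c l) * unit_root N (- ((- l) * int j)))" for j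
    by (simp add: circ_eigenvalue_def trig_sum_def cnj_sum cnj_unit_root)
  moreover have "trig_poly N K (\<lambda>j. \<Sum>l\<in>{-int K..int K}. cnj (c l) * unit_root N (- ((- l) * int j)))"
    by (intro trig_poly_sum trig_poly_cmult trig_poly_unit_root) auto
  ultimately show ?thesis by simp
qed

lemma trig_poly_cmod_sq_circ_eigenvalue:
  "trig_poly N (2 * K) (\<lambda>j. of_real ((cmod (circ_eigenvalue N K c j))\<^sup>2))"
  unfolding complex_norm_square mult_2
  by (rule trig_poly_mult[OF trig_poly_circ_eigenvalue trig_poly_cnj_circ_eigenvalue])

section \<open>Chebyshev polynomials\<close>

fun cheb_poly :: "nat \<Rightarrow> real poly" where
  "cheb_poly 0 = 1"
| "cheb_poly (Suc 0) = [:0, 1:]"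
| "cheb_poly (Suc (Suc n)) = [:0, 2:] * cheb_poly (Suc n) - cheb_poly n"

lemma degree_cheb_poly_le: "degree (cheb_poly n) \<le> n"
proof (induction n rule: cheb_poly.induct)
  case (3 n)
  have "degree ([:0, 2:] * cheb_poly (Suc n)) \<le> Suc (Suc n)"
    using degree_mult_le[of "[:0, 2:]" "cheb_poly (Suc n)"] 3 by simp
  moreover have "degree (cheb_poly n) \<le> Suc (Suc n)"
    using 3 by simp
  ultimately show ?case
    by (simp add: degree_diff_le)
qed simp_all

lemma poly_cheb_poly_cos: "poly (cheb_poly n) (cos \<theta>) = cos (real n * \<theta>)"
proof (induction n rule: cheb_poly.induct)
  case (3 n)
  have "cos (real (Suc n) * \<theta> + \<theta>) + cos (real (Suc n) * \<theta> - \<theta>) = 2 * cos \<theta> * cos (real (Suc n) * \<theta>)"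
    by (simp add: cos_add cos_diff)
  then show ?case
    using 3 by (simp add: algebra_simps)
qed simp_all

lemma abs_poly_cheb_poly_le_1: "\<bar>x\<bar> \<le> 1 \<Longrightarrow> \<bar>poly (cheb_poly n) x\<bar> \<le> 1"
  by (metis abs_cos_le_one cos_arccos_abs poly_cheb_poly_cos)

lemma poly_cheb_poly_reciprocal:
  assumes "r * s = 1"
  shows "poly (cheb_poly n) ((r + s) / 2) = (r ^ n + s ^ n) / 2"
proof (induction n rule: cheb_poly.induct)
  case (3 n)
  have "r * s ^ Suc n = s ^ n" "s * r ^ Suc n = r ^ n"
    using assms by (simp_all add: algebra_simps)
  then show ?case
    using 3 by (simp add: field_simps) (simp add: mult.assoc[symmetric] assms)
qed simp_all

lemma poly_cheb_poly_growth:
  assumes "0 < y" "y < 1"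
  shows "exp (real n * y) / 2 \<le> poly (cheb_poly n) ((1 + y\<^sup>2) / (1 - y\<^sup>2))"
proof -
  define r where "r = (1 + y) / (1 - y)"
  have "y * y < 1"
    using mult_strict_mono[of y 1 y 1] assms by simp
  then have u: "(1 + y\<^sup>2) / (1 - y\<^sup>2) = (r + 1 / r) / 2"
    using assms by (simp add: r_def field_simps power2_eq_square)
  have "r > 0"
    using assms by (simp add: r_def)
  then have "poly (cheb_poly n) ((1 + y\<^sup>2) / (1 - y\<^sup>2)) = (r ^ n + (1 / r) ^ n) / 2"
    unfolding u by (intro poly_cheb_poly_reciprocal) simp
  moreover have "exp y \<le> r"
  proof -
    have "exp y * (1 - y) \<le> exp y * exp (- y)"
      using exp_ge_add_one_self[of "- y"] by (intro mult_left_mono) auto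
    then have "exp y \<le> 1 / (1 - y)"
      using assms by (simp add: exp_minus field_simps)
    also have "\<dots> \<le> r"
      using assms by (simp add: r_def divide_right_mono)
    finally show ?thesis .
  qed
  then have "exp (real n * y) \<le> r ^ n"
    by (simp add: exp_of_nat_mult power_mono)
  moreover have "0 \<le> (1 / r) ^ n"
    using assms by (simp add: r_def)
  ultimately show ?thesis by simp
qed

lemma poly_cheb_poly_large:
  fixes m M \<nu> :: real
  assumes m: "0 < m" "m \<le> M" and \<nu>: "0 < \<nu>" and d: "M / m * ln (4 / \<nu>) \<le> real d"
  defines "c \<equiv> poly (cheb_poly d) ((4 * M\<^sup>2 + m\<^sup>2) / (4 * M\<^sup>2 - m\<^sup>2))"
  shows "0 < c" "1 / c\<^sup>2 \<le> \<nu>"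
proof -
  define y where "y = m / (2 * M)"
  have y: "0 < y" "y < 1"
    using m by (auto simp: y_def field_simps)
  have "0 < m\<^sup>2" "m\<^sup>2 \<le> M\<^sup>2"
    using m by (auto intro: power_mono)
  then have "0 < 4 * M\<^sup>2 - m\<^sup>2"
    by linarith
  then have "(4 * M\<^sup>2 + m\<^sup>2) / (4 * M\<^sup>2 - m\<^sup>2) = (1 + y\<^sup>2) / (1 - y\<^sup>2)"
    using m by (simp add: y_def field_simps power2_eq_square)
  then have c_ge: "exp (real d * y) / 2 \<le> c"
    using poly_cheb_poly_growth[OF y] by (simp add: c_def)
  then show c_pos: "0 < c"
    using exp_gt_zero[of "real d * y"] by linarith
  have "ln (4 / \<nu>) \<le> 2 * (real d * y)"
    using d m by (simp add: y_def field_simps)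
  then have "4 / \<nu> \<le> exp (2 * (real d * y))"
    using \<nu> by (metis exp_le_cancel_iff exp_ln zero_less_divide_iff zero_less_numeral)
  also have "\<dots> = (exp (real d * y))\<^sup>2"
    by (rule exp_double)
  also have "\<dots> \<le> (2 * c)\<^sup>2"
    using c_ge by (intro power_mono) auto
  finally show "1 / c\<^sup>2 \<le> \<nu>"
    using c_pos \<nu> by (simp add: field_simps power2_eq_square)
qed

lemma reciprocal_poly_approx:
  fixes m M \<nu> :: real
  assumes m: "0 < m" "m \<le> M" and \<nu>: "0 < \<nu>" and d: "M / m * ln (4 / \<nu>) \<le> real d"
  shows "\<exists>q. degree q \<le> d \<and> (\<forall>t. m\<^sup>2 \<le> t \<longrightarrow> t \<le> M\<^sup>2 \<longrightarrow> (1 - t * poly q t)\<^sup>2 \<le> \<nu>)"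
proof -
  \<comment> \<open>\<open>t \<mapsto> u0 - g * t\<close> maps \<open>[m\<^sup>2, 4 * M\<^sup>2]\<close> onto \<open>[-1, 1]\<close>; the right end is
    widened from \<open>M\<^sup>2\<close> to \<open>4 * M\<^sup>2\<close> so that the map stays defined when \<open>m = M\<close>.
    Then \<open>1 - t * poly q t = poly (cheb_poly d) (u0 - g * t) / c\<close>.\<close>
  define u0 where "u0 = (4 * M\<^sup>2 + m\<^sup>2) / (4 * M\<^sup>2 - m\<^sup>2)"
  define g where "g = 2 / (4 * M\<^sup>2 - m\<^sup>2)"
  define p where "p = cheb_poly d \<circ>\<^sub>p [:u0, - g:]"
  define c where "c = poly p 0"
  define q where "q = smult (- 1 / c) (synthetic_div p 0)"
  have poly_p: "poly p t = poly (cheb_poly d) (u0 - g * t)" for t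
    by (simp add: p_def poly_pcompose algebra_simps)
  have c: "0 < c" "1 / c\<^sup>2 \<le> \<nu>"
    using poly_cheb_poly_large[OF m \<nu> d] by (simp_all add: c_def poly_p u0_def)
  have "0 < m\<^sup>2" "m\<^sup>2 \<le> M\<^sup>2"
    using m by (auto intro: power_mono)
  then have mM: "m\<^sup>2 \<le> M\<^sup>2" "0 < 4 * M\<^sup>2 - m\<^sup>2"
    by linarith+
  have "degree q \<le> d"
    using degree_pcompose_le[of "cheb_poly d" "[:u0, - g:]"] degree_cheb_poly_le[of d]
    by (auto simp: q_def p_def degree_synthetic_div)
  moreover have "(1 - t * poly q t)\<^sup>2 \<le> \<nu>" if t: "m\<^sup>2 \<le> t" "t \<le> M\<^sup>2" for t
  proof -
    have "t * poly (synthetic_div p 0) t + c = poly p t"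
      using arg_cong[OF synthetic_div_correct'[of 0 p], of "\<lambda>p. poly p t"] by (simp add: c_def)
    then have "1 - t * poly q t = poly p t / c"
      using c by (simp add: q_def field_simps)
    moreover have "\<bar>u0 - g * t\<bar> \<le> 1"
    proof -
      have "u0 - g * t = (4 * M\<^sup>2 + m\<^sup>2 - 2 * t) / (4 * M\<^sup>2 - m\<^sup>2)"
        by (simp add: u0_def g_def diff_divide_distrib)
      moreover have "\<bar>4 * M\<^sup>2 + m\<^sup>2 - 2 * t\<bar> \<le> 4 * M\<^sup>2 - m\<^sup>2"
        using t mM zero_le_power2[of M] unfolding abs_le_iff by linarith
      ultimately show ?thesis
        using mM(2) by (simp add: abs_divide)
    qed
    then have "(poly p t)\<^sup>2 \<le> 1"
      unfolding poly_p by (simp add: abs_poly_cheb_poly_le_1 abs_square_le_1)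
    ultimately have "(1 - t * poly q t)\<^sup>2 \<le> 1 / c\<^sup>2"
      using c by (simp add: power_divide divide_right_mono)
    then show ?thesis
      using c by linarith
  qed
  ultimately show ?thesis by blast
qed

section \<open>Residuals of the ansatz\<close>

lemma vnorm_sq_eq_dft:
  assumes "x \<in> carrier_vec N" "N > 0"
  shows "(vnorm x)\<^sup>2 = (\<Sum>j<N. (cmod (dft x j))\<^sup>2) / N"
  using sum_cmod_dft_sq[of x] assms by simp

lemma residual_circ_dft:
  assumes x: "x \<in> carrier_vec N" and b: "b \<in> carrier_vec N" and N: "N > 0"
  shows "(vnorm (circ N K c *\<^sub>v x - b))\<^sup>2
         = (\<Sum>j<N. (cmod (circ_eigenvalue N K c j * dft x j - dft b j))\<^sup>2) / N"
proof -
  have Cx: "circ N K c *\<^sub>v x \<in> carrier_vec N"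
    by (rule mult_mat_vec_carrier[OF circ_carrier x])
  show ?thesis
    using vnorm_sq_eq_dft[OF minus_carrier_vec[OF Cx b] N] Cx b x
    by (simp add: dft_diff dft_circ_mult_vec)
qed

lemma residual_circ_ge:
  assumes "x \<in> carrier_vec N" "b \<in> carrier_vec N" "N > 0"
  shows "(\<Sum>j | j < N \<and> circ_eigenvalue N K c j = 0. (cmod (dft b j))\<^sup>2) / N
         \<le> (vnorm (circ N K c *\<^sub>v x - b))\<^sup>2"
proof -
  have "(\<Sum>j | j < N \<and> circ_eigenvalue N K c j = 0. (cmod (dft b j))\<^sup>2)
      = (\<Sum>j | j < N \<and> circ_eigenvalue N K c j = 0. (cmod (circ_eigenvalue N K c j * dft x j - dft b j))\<^sup>2)"
    by (intro sum.cong) auto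
  also have "\<dots> \<le> (\<Sum>j<N. (cmod (circ_eigenvalue N K c j * dft x j - dft b j))\<^sup>2)"
    by (intro sum_mono2) auto
  finally show ?thesis
    using assms by (simp add: residual_circ_dft divide_right_mono)
qed

lemma ansatz_carrier: "ansatz N T \<alpha> b \<in> carrier_vec N"
  by (simp add: ansatz_def)

lemma ansatz_eq_lincomb_shifts: "ansatz N T \<alpha> b = lincomb_vec N {-int T..int T} \<alpha> (\<lambda>m. Qpow N m *\<^sub>v b)"
  unfolding ansatz_def lincomb_vec_def ..

lemma residual_ansatz_le:
  assumes b: "b \<in> carrier_vec N" "vnorm b = 1" and N: "N > 0" and "0 \<le> \<nu>"
    and inv: "\<And>j. j < N \<Longrightarrow> circ_eigenvalue N K c j \<noteq> 0 \<Longrightarrow>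
                 (cmod (circ_eigenvalue N K c j * trig_sum N {-int T..int T} \<alpha> j - 1))\<^sup>2 \<le> \<nu>"
  shows "(vnorm (circ N K c *\<^sub>v ansatz N T \<alpha> b - b))\<^sup>2
         \<le> (\<Sum>j | j < N \<and> circ_eigenvalue N K c j = 0. (cmod (dft b j))\<^sup>2) / N + \<nu>"
proof -
  let ?ev = "circ_eigenvalue N K c" and ?p = "trig_sum N {-int T..int T} \<alpha>"
  let ?Z = "{j. j < N \<and> ?ev j = 0}"
  have dft_ansatz: "dft (ansatz N T \<alpha> b) j = ?p j * dft b j" for j
    using b by (simp add: ansatz_eq_lincomb_shifts dft_lincomb_shifts)
  have term_le: "(cmod (?ev j * ?p j - 1))\<^sup>2 * (cmod (dft b j))\<^sup>2
      \<le> (if j \<in> ?Z then (cmod (dft b j))\<^sup>2 else 0) + \<nu> * (cmod (dft b j))\<^sup>2" if "j < N" for j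
    using inv[OF that] \<open>0 \<le> \<nu>\<close> that by (auto intro: mult_right_mono)
  have "?ev j * (?p j * dft b j) - dft b j = (?ev j * ?p j - 1) * dft b j" for j
    by (simp add: algebra_simps)
  then have "(vnorm (circ N K c *\<^sub>v ansatz N T \<alpha> b - b))\<^sup>2
      = (\<Sum>j<N. (cmod (?ev j * ?p j - 1))\<^sup>2 * (cmod (dft b j))\<^sup>2) / N"
    by (simp add: residual_circ_dft[OF ansatz_carrier b(1) N] dft_ansatz norm_mult power_mult_distrib)
  also have "\<dots> \<le> (\<Sum>j<N. (if j \<in> ?Z then (cmod (dft b j))\<^sup>2 else 0) + \<nu> * (cmod (dft b j))\<^sup>2) / N"
    using term_le by (intro divide_right_mono sum_mono) auto
  also have "\<dots> = (\<Sum>j\<in>?Z. (cmod (dft b j))\<^sup>2) / N + \<nu> * (\<Sum>j<N. (cmod (dft b j))\<^sup>2) / N"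
    by (simp add: sum.distrib sum_distrib_left sum.If_cases add_divide_distrib Collect_conj_eq
        lessThan_def Int_commute)
  also have "(\<Sum>j<N. (cmod (dft b j))\<^sup>2) = N"
    using sum_cmod_dft_sq[of b] b by simp
  finally show ?thesis
    using N by simp
qed

lemma mult_mat_vec_lincomb_vec:
  assumes A: "A \<in> carrier_mat N N" and u: "\<And>k. u k \<in> carrier_vec N" and I: "finite I"
  shows "A *\<^sub>v lincomb_vec N I a u = lincomb_vec N I a (\<lambda>k. A *\<^sub>v u k)"
proof (rule eq_vecI)
  fix i assume "i < dim_vec (lincomb_vec N I a (\<lambda>k. A *\<^sub>v u k))"
  then have i: "i < N" by (simp add: lincomb_vec_def)
  have "(A *\<^sub>v lincomb_vec N I a u) $ i = (\<Sum>l<N. A $$ (i, l) * lincomb_vec N I a u $ l)"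
    by (rule index_mult_mat_vec_sum[OF A lincomb_vec_carrier i])
  also have "\<dots> = (\<Sum>k\<in>I. a k * (\<Sum>l<N. A $$ (i, l) * u k $ l))"
    by (simp add: lincomb_vec_def sum_distrib_left sum.swap[of _ I] mult_ac)
  finally show "(A *\<^sub>v lincomb_vec N I a u) $ i = lincomb_vec N I a (\<lambda>k. A *\<^sub>v u k) $ i"
    using i by (simp add: lincomb_vec_def index_mult_mat_vec_sum[OF A u i] del: index_mult_mat_vec)
qed (use A in \<open>simp add: lincomb_vec_def\<close>)

lemma ansatz_least_squares:
  assumes b: "b \<in> carrier_vec N"
  shows "\<exists>\<alpha>. \<forall>\<beta>. (vnorm (circ N K c *\<^sub>v ansatz N T \<alpha> b - b))\<^sup>2
                  \<le> (vnorm (circ N K c *\<^sub>v ansatz N T \<beta> b - b))\<^sup>2"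
proof -
  let ?S = "{-int T..int T}" and ?u = "\<lambda>m. circ N K c *\<^sub>v (Qpow N m *\<^sub>v b)"
  have u: "?u m \<in> carrier_vec N" for m
    using b by (simp add: mult_mat_vec_carrier[OF circ_carrier] mult_mat_vec_carrier[OF Qpow_carrier])
  have residual: "(vnorm (circ N K c *\<^sub>v ansatz N T \<beta> b - b))\<^sup>2
      = (\<Sum>i<N. (cmod (b $ i - (\<Sum>m\<in>?S. \<beta> m * ?u m $ i)))\<^sup>2)" for \<beta>
  proof -
    have "circ N K c *\<^sub>v ansatz N T \<beta> b = lincomb_vec N ?S \<beta> ?u"
      using b unfolding ansatz_eq_lincomb_shifts
      by (intro mult_mat_vec_lincomb_vec) (auto intro: mult_mat_vec_carrier[OF Qpow_carrier])
    then show ?thesis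
      using b by (simp add: vnorm_sq lincomb_vec_def norm_minus_commute)
  qed
  show ?thesis
    using least_squares_solvable[where I = ?S and N = N and y = "\<lambda>i. b $ i" and u = "\<lambda>m i. ?u m $ i"]
    unfolding residual by simp
qed

lemma circ_eigenvalue_nonzero:
  assumes "circ N K c \<noteq> 0\<^sub>m N N"
  shows "\<exists>j<N. circ_eigenvalue N K c j \<noteq> 0"
proof (rule ccontr)
  assume "\<not> ?thesis"
  then have zero: "circ_eigenvalue N K c j = 0" if "j < N" for j
    using that by blast
  have "circ N K c $$ (i, k) = 0" if ik: "i < N" "k < N" for i k
  proof -
    have "circ N K c *\<^sub>v unit_vec N k \<in> carrier_vec N"
      by (rule mult_mat_vec_carrier[OF circ_carrier unit_vec_carrier])
    then have "circ N K c *\<^sub>v unit_vec N k = 0\<^sub>v N"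
      by (rule dft_inj[OF _ zero_carrier_vec])
        (simp add: dft_circ_mult_vec[OF unit_vec_carrier] zero, simp add: dft_def)
    then have "(circ N K c *\<^sub>v unit_vec N k) $ i = 0"
      using ik by simp
    then show ?thesis
      using ik by (simp add: circ_def)
  qed
  then have "circ N K c = 0\<^sub>m N N"
    by (intro eq_matI) (auto simp: circ_def)
  then show False
    using assms by blast
qed

lemma cond_num_circ:
  assumes "circ N K c \<noteq> 0\<^sub>m N N"
  obtains m M where "0 < m" "m \<le> M" "cond_num (circ N K c) = M / m"
    "\<And>j. j < N \<Longrightarrow> circ_eigenvalue N K c j \<noteq> 0 \<Longrightarrow>
       m \<le> cmod (circ_eigenvalue N K c j) \<and> cmod (circ_eigenvalue N K c j) \<le> M"
proof -
  let ?S = "(\<lambda>j. cmod (circ_eigenvalue N K c j)) ` {..<N}"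
  obtain j0 where j0: "j0 < N" "circ_eigenvalue N K c j0 \<noteq> 0"
    using circ_eigenvalue_nonzero[OF assms] by blast
  define m where "m = Min (?S - {0})"
  define M where "M = Max ?S"
  have "m \<in> ?S - {0}"
    unfolding m_def using j0 by (intro Min_in) auto
  then have m: "0 < m" by auto
  have bounds: "m \<le> cmod (circ_eigenvalue N K c j) \<and> cmod (circ_eigenvalue N K c j) \<le> M"
    if "j < N" "circ_eigenvalue N K c j \<noteq> 0" for j
    using that unfolding m_def M_def by (auto intro: Min_le Max_ge)
  have "cond_num (circ N K c) = M / m"
    unfolding cond_num_def sigma_max_def sigma_min_def singular_values_circ m_def M_def ..
  then show thesis
    using that m bounds bounds[OF j0] by (meson order_trans)
qed

lemma ansatz_length_bound:
  fixes \<kappa> \<nu> :: real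
  assumes \<kappa>: "1 \<le> \<kappa>" and \<nu>: "0 < \<nu>" "\<nu> \<le> 1"
  shows "real (K + 2 * K * nat \<lceil>\<kappa> * ln (4 / \<nu>)\<rceil>) \<le> 9 * real K * (\<kappa> * ln (\<kappa> / \<nu>) + 1)"
proof -
  have "\<kappa> * ln 4 \<le> \<kappa> * 3"
    using \<kappa> ln_le_minus_one[of 4] by (intro mult_left_mono) auto
  moreover have "\<kappa> - 1 \<le> \<kappa> * ln \<kappa>"
  proof -
    have "\<kappa> * - ln \<kappa> \<le> \<kappa> * (1 / \<kappa> - 1)"
      using \<kappa> ln_le_minus_one[of "1 / \<kappa>"] by (intro mult_left_mono) (auto simp: ln_div)
    then show ?thesis
      using \<kappa> by (simp add: algebra_simps)
  qed
  moreover have "\<kappa> * ln \<nu> \<le> 0" "0 \<le> \<kappa> * ln \<kappa>"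
    using \<kappa> \<nu> by (auto intro: mult_nonneg_nonpos)
  moreover have "real (nat \<lceil>\<kappa> * ln (4 / \<nu>)\<rceil>) \<le> \<kappa> * ln (4 / \<nu>) + 1"
    using \<kappa> \<nu> of_int_ceiling_le_add_one[of "\<kappa> * ln (4 / \<nu>)"] by simp
  then obtain D where D: "real (nat \<lceil>\<kappa> * ln (4 / \<nu>)\<rceil>) = D" "D \<le> \<kappa> * ln (4 / \<nu>) + 1"
    by blast
  moreover have "\<kappa> * ln (4 / \<nu>) = \<kappa> * ln 4 - \<kappa> * ln \<nu>" "\<kappa> * ln (\<kappa> / \<nu>) = \<kappa> * ln \<kappa> - \<kappa> * ln \<nu>"
    using \<kappa> \<nu> by (simp_all add: ln_div right_diff_distrib)
  ultimately have "1 + 2 * D \<le> 9 * (\<kappa> * ln (\<kappa> / \<nu>) + 1)"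
    by (smt (verit))
  then have "real K * (1 + 2 * D) \<le> real K * (9 * (\<kappa> * ln (\<kappa> / \<nu>) + 1))"
    by (rule mult_left_mono) simp
  then show ?thesis
    by (simp add: D(1) algebra_simps)
qed

lemma circ_inverse_trig_poly:
  assumes m: "0 < m" "m \<le> M"
    and bounds: "\<And>j. j < N \<Longrightarrow> circ_eigenvalue N K c j \<noteq> 0 \<Longrightarrow>
                   m \<le> cmod (circ_eigenvalue N K c j) \<and> cmod (circ_eigenvalue N K c j) \<le> M"
    and \<nu>: "0 < \<nu>" and d: "M / m * ln (4 / \<nu>) \<le> real d"
  shows "\<exists>\<alpha>. \<forall>j<N. circ_eigenvalue N K c j \<noteq> 0 \<longrightarrow>
           (cmod (circ_eigenvalue N K c j * trig_sum N {-int (K + 2 * K * d)..int (K + 2 * K * d)} \<alpha> j - 1))\<^sup>2 \<le> \<nu>"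
proof -
  let ?ev = "circ_eigenvalue N K c"
  obtain q where q: "degree q \<le> d" "\<And>t. m\<^sup>2 \<le> t \<Longrightarrow> t \<le> M\<^sup>2 \<Longrightarrow> (1 - t * poly q t)\<^sup>2 \<le> \<nu>"
    using reciprocal_poly_approx[OF m \<nu> d] by blast
  \<comment> \<open>\<open>f j\<close> approximates \<open>1 / ?ev j\<close> wherever \<open>?ev j \<noteq> 0\<close>.\<close>
  define f where "f j = cnj (?ev j) * of_real (poly q ((cmod (?ev j))\<^sup>2))" for j
  have "trig_poly N (K + 2 * K * degree q) f"
    unfolding f_def
    by (intro trig_poly_mult trig_poly_cnj_circ_eigenvalue trig_poly_poly trig_poly_cmod_sq_circ_eigenvalue)
  then have "trig_poly N (K + 2 * K * d) f"
    by (rule trig_poly_mono) (simp add: q(1))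
  then obtain \<alpha> where \<alpha>: "\<forall>j<N. f j = trig_sum N {-int (K + 2 * K * d)..int (K + 2 * K * d)} \<alpha> j"
    unfolding trig_poly_def by blast
  have "(cmod (?ev j * f j - 1))\<^sup>2 \<le> \<nu>" if "j < N" "?ev j \<noteq> 0" for j
  proof -
    let ?t = "(cmod (?ev j))\<^sup>2"
    have residual: "?ev j * f j - 1 = of_real (?t * poly q ?t - 1)"
      unfolding f_def mult.assoc[symmetric] complex_norm_square[symmetric] by simp
    have "(cmod (?ev j * f j - 1))\<^sup>2 = (1 - ?t * poly q ?t)\<^sup>2"
      unfolding residual norm_of_real power2_abs by (rule power2_commute)
    also have "\<dots> \<le> \<nu>"
      using bounds[OF that] m by (intro q(2)) (auto intro: power_mono)
    finally show ?thesis .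
  qed
  then show ?thesis
    using \<alpha> by auto
qed

lemma ansatz_near_optimal:
  assumes N: "N > 0" and C: "circ N K c \<noteq> 0\<^sub>m N N" and b: "b \<in> carrier_vec N" "vnorm b = 1"
    and \<nu>: "0 < \<nu>"
  defines "T \<equiv> K + 2 * K * nat \<lceil>cond_num (circ N K c) * ln (4 / \<nu>)\<rceil>"
  shows "\<exists>\<alpha>. \<forall>x\<in>carrier_vec N.
           (vnorm (circ N K c *\<^sub>v ansatz N T \<alpha> b - b))\<^sup>2 \<le> (vnorm (circ N K c *\<^sub>v x - b))\<^sup>2 + \<nu>"
proof -
  obtain m M where m: "0 < m" "m \<le> M" and \<kappa>: "cond_num (circ N K c) = M / m"
    and bounds: "\<And>j. j < N \<Longrightarrow> circ_eigenvalue N K c j \<noteq> 0 \<Longrightarrow>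
                   m \<le> cmod (circ_eigenvalue N K c j) \<and> cmod (circ_eigenvalue N K c j) \<le> M"
    using cond_num_circ[OF C] by blast
  have "M / m * ln (4 / \<nu>) \<le> real (nat \<lceil>cond_num (circ N K c) * ln (4 / \<nu>)\<rceil>)"
    unfolding \<kappa> by linarith
  then obtain \<alpha> where "\<forall>j<N. circ_eigenvalue N K c j \<noteq> 0 \<longrightarrow>
      (cmod (circ_eigenvalue N K c j * trig_sum N {-int T..int T} \<alpha> j - 1))\<^sup>2 \<le> \<nu>"
    unfolding T_def using circ_inverse_trig_poly[OF m bounds \<nu>] by blast
  then have "(vnorm (circ N K c *\<^sub>v ansatz N T \<alpha> b - b))\<^sup>2
      \<le> (\<Sum>j | j < N \<and> circ_eigenvalue N K c j = 0. (cmod (dft b j))\<^sup>2) / N + \<nu>"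
    using \<nu> by (intro residual_ansatz_le[OF b N]) auto
  moreover have "(\<Sum>j | j < N \<and> circ_eigenvalue N K c j = 0. (cmod (dft b j))\<^sup>2) / N
      \<le> (vnorm (circ N K c *\<^sub>v x - b))\<^sup>2" if "x \<in> carrier_vec N" for x
    using residual_circ_ge[OF that b(1) N] .
  ultimately show ?thesis
    by (meson add_right_mono order_trans)
qed

lemma one_le_cond_num_circ:
  assumes "circ N K c \<noteq> 0\<^sub>m N N" shows "1 \<le> cond_num (circ N K c)"
proof -
  obtain m M where "0 < m" "m \<le> M" "cond_num (circ N K c) = M / m"
    using cond_num_circ[OF assms] by blast
  then show ?thesis by simp
qed

theorem proposition1:
  shows "\<exists>c0 > (0::real). \<forall>(N::nat) (K::nat) (c::int \<Rightarrow> complex) (b::complex vec) (\<nu>::real).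
    N > 0 \<longrightarrow> 0 < \<nu> \<longrightarrow> \<nu> \<le> 1 \<longrightarrow> circ N K c \<noteq> 0\<^sub>m N N \<longrightarrow>
    b \<in> carrier_vec N \<longrightarrow> vnorm b = 1 \<longrightarrow>
    (\<exists>T::nat. real T \<le> c0 * real K * (cond_num (circ N K c) * ln (cond_num (circ N K c) / \<nu>) + 1) \<and>
      (\<exists>\<alpha>::int \<Rightarrow> complex.
         (\<forall>\<beta>::int \<Rightarrow> complex.
            (vnorm (circ N K c *\<^sub>v ansatz N T \<alpha> b - b))\<^sup>2 \<le> (vnorm (circ N K c *\<^sub>v ansatz N T \<beta> b - b))\<^sup>2) \<and>
         (\<forall>x \<in> carrier_vec N.
            (vnorm (circ N K c *\<^sub>v ansatz N T \<alpha> b - b))\<^sup>2 \<le> (vnorm (circ N K c *\<^sub>v x - b))\<^sup>2 + \<nu>)))"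
proof (intro exI[of _ "9::real"] conjI allI impI)
  fix N K :: nat and c :: "int \<Rightarrow> complex" and b :: "complex vec" and \<nu> :: real
  assume N: "N > 0" and \<nu>: "0 < \<nu>" "\<nu> \<le> 1" and C: "circ N K c \<noteq> 0\<^sub>m N N"
    and b: "b \<in> carrier_vec N" "vnorm b = 1"
  define T where "T = K + 2 * K * nat \<lceil>cond_num (circ N K c) * ln (4 / \<nu>)\<rceil>"
  obtain \<alpha> where near: "\<forall>x\<in>carrier_vec N.
      (vnorm (circ N K c *\<^sub>v ansatz N T \<alpha> b - b))\<^sup>2 \<le> (vnorm (circ N K c *\<^sub>v x - b))\<^sup>2 + \<nu>"
    using ansatz_near_optimal[OF N C b \<nu>(1)] unfolding T_def by blast
  obtain \<alpha>' where opt: "\<forall>\<beta>. (vnorm (circ N K c *\<^sub>v ansatz N T \<alpha>' b - b))\<^sup>2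
      \<le> (vnorm (circ N K c *\<^sub>v ansatz N T \<beta> b - b))\<^sup>2"
    using ansatz_least_squares[OF b(1)] by blast
  have "real T \<le> 9 * real K * (cond_num (circ N K c) * ln (cond_num (circ N K c) / \<nu>) + 1)"
    unfolding T_def using ansatz_length_bound one_le_cond_num_circ[OF C] \<nu> by blast
  moreover have "(vnorm (circ N K c *\<^sub>v ansatz N T \<alpha>' b - b))\<^sup>2 \<le> (vnorm (circ N K c *\<^sub>v x - b))\<^sup>2 + \<nu>"
    if "x \<in> carrier_vec N" for x
    using order_trans[OF opt[rule_format] near[rule_format, OF that]] .
  ultimately show "\<exists>T. real T \<le> 9 * real K * (cond_num (circ N K c) * ln (cond_num (circ N K c) / \<nu>) + 1) \<and>
      (\<exists>\<alpha>. (\<forall>\<beta>. (vnorm (circ N K c *\<^sub>v ansatz N T \<alpha> b - b))\<^sup>2 \<le> (vnorm (circ N K c *\<^sub>v ansatz N T \<beta> b - b))\<^sup>2) \<and>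
         (\<forall>x\<in>carrier_vec N. (vnorm (circ N K c *\<^sub>v ansatz N T \<alpha> b - b))\<^sup>2 \<le> (vnorm (circ N K c *\<^sub>v x - b))\<^sup>2 + \<nu>))"
    using opt by blast
qed simp

end
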